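(* Let $p, q$ be probability distributions on a finite set $\mathcal{X}$ with $\mathrm{supp}(p)\subseteq\mathrm{supp}(q)$, let $L>0$, and let $\rho(x) := \log_2(p(x)/q(x))$ for $x\in\mathrm{supp}(p)$. Define $\eta_L(p,q) := D_{\mathrm{KL}}(p\|q) - D_{\mathrm{KL},L}(p\|q)$. Then \[ |\eta_L(p,q)| \le \mathbb{E}_{X\sim p}\bigl[(|\rho(X)|-L)\,\mathbf{1}\{|\rho(X)|>L\}\bigr], \] and hence \[ |\eta_L(p,q)| \le \Bigl(\log_2(1/p_{\min}) + \log_2(1/q_{\min})\Bigr)\Pr_{X\sim p}\bigl[|\rho(X)|>L\bigr], \] where $p_{\min} = \min_{x\in\mathrm{supp}(p)} p(x)$ and $q_{\min} = \min_{x\in\mathrm{supp}(q)} q(x)$. In particular, if $2^{-L}p(x)\le q(x)\le 2^{L}p(x)$ for every $x\in\mathrm{supp}(p)$ (equivalently $|\rho(x)|\le L$ on $\mathrm{supp}(p)$), then $\eta_L(p,q)=0$ and $D_{\mathrm{KL},L}(p\|q) = D_{\mathrm{KL}}(p\|q)$.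
   Context: All logarithms are base 2. $D_{\mathrm{KL}}(p\|q) = \sum_x p(x)\log_2(p(x)/q(x))$. For $u\in\mathbb{R}$, $\mathrm{clip}_L(u) := \max(-L,\min(L,u))$. The clipped log-ratio is $\ell_L(x) := \mathrm{clip}_L(\log_2(p(x)/q(x)))$ (with conventions $\log_2(p/0)=+\infty$ for $p>0$, $\log_2(0/q)=-\infty$ for $q>0$), and the clipped KL expectation is $D_{\mathrm{KL},L}(p\|q) := \sum_{x\in\mathcal{X}} p(x)\,\ell_L(x)$. *)

theory Defs
  imports "HOL-Analysis.Analysis"
begin

definition is_distr :: "('a::finite \<Rightarrow> real) \<Rightarrow> bool" where
  "is_distr p \<longleftrightarrow> (\<forall>x. 0 \<le> p x) \<and> (\<Sum>x\<in>UNIV. p x) = 1"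

definition supp :: "('a \<Rightarrow> real) \<Rightarrow> 'a set" where
  "supp p = {x. p x > 0}"

definition clip :: "real \<Rightarrow> real \<Rightarrow> real" where
  "clip L u = max (- L) (min L u)"

text \<open>Clipped log-ratio with the conventions log(p/0) = +inf (p>0), log(0/q) = -inf (q>0).
  The case p x = q x = 0 is irrelevant (weighted by p x = 0); we set it to 0.\<close>
definition clipped_logratio :: "real \<Rightarrow> ('a \<Rightarrow> real) \<Rightarrow> ('a \<Rightarrow> real) \<Rightarrow> 'a \<Rightarrow> real" where
  "clipped_logratio L p q x =
     (if p x > 0 \<and> q x = 0 then L
      else if p x = 0 \<and> q x > 0 then - L
      else if p x = 0 \<and> q x = 0 then 0
      else clip L (log 2 (p x / q x)))"

definition KL_clip :: "real \<Rightarrow> ('a::finite \<Rightarrow> real) \<Rightarrow> ('a \<Rightarrow> real) \<Rightarrow> real" where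
  "KL_clip L p q = (\<Sum>x\<in>UNIV. p x * clipped_logratio L p q x)"

text \<open>KL divergence (base 2), with the convention 0 log(0/q) = 0; only used when supp p \<subseteq> supp q,
  where it is finite.\<close>
definition KL :: "('a::finite \<Rightarrow> real) \<Rightarrow> ('a \<Rightarrow> real) \<Rightarrow> real" where
  "KL p q = (\<Sum>x\<in>supp p. p x * log 2 (p x / q x))"

end

theory Submission
  imports Defs
begin

text \<open>On the support of p the clipped and unclipped log-ratios differ by the excess
  \<open>(\<bar>\<rho>\<bar> - L)\<^sup>+\<close>, so the triangle inequality bounds the gap by its p-expectation.
  Since p and q are distributions, \<open>\<bar>\<rho>(x)\<bar> \<le> log(1/p\<^sub>m\<^sub>i\<^sub>n) + log(1/q\<^sub>m\<^sub>i\<^sub>n)\<close> on the support,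
  which bounds the excess by that constant times the indicator of \<open>\<bar>\<rho>\<bar> > L\<close>.\<close>

lemma abs_diff_clip:
  assumes "L \<ge> 0"
  shows "\<bar>u - clip L u\<bar> = (if \<bar>u\<bar> > L then \<bar>u\<bar> - L else 0)"
  using assms unfolding clip_def by auto

lemma is_distr_nonneg: "is_distr p \<Longrightarrow> 0 \<le> p x"
  unfolding is_distr_def by auto

lemma is_distr_le_one:
  assumes "is_distr p"
  shows "p x \<le> 1"
proof -
  have "p x \<le> (\<Sum>y\<in>UNIV. p y)"
    by (rule member_le_sum) (use assms in \<open>auto simp: is_distr_nonneg\<close>)
  then show ?thesis
    using assms unfolding is_distr_def by simp
qed

lemma KL_clip_eq_sum_supp:
  assumes "\<And>x. 0 \<le> p x" and "supp p \<subseteq> supp q"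
  shows "KL_clip L p q = (\<Sum>x\<in>supp p. p x * clip L (log 2 (p x / q x)))"
  unfolding KL_clip_def
proof (rule sym, rule sum.mono_neutral_cong_left)
  show "\<forall>x\<in>UNIV - supp p. p x * clipped_logratio L p q x = 0"
    using assms(1) unfolding supp_def by (auto simp: order.order_iff_strict)
  show "p x * clip L (log 2 (p x / q x)) = p x * clipped_logratio L p q x" if "x \<in> supp p" for x
    using that assms(2) unfolding supp_def clipped_logratio_def by auto
qed auto

lemma abs_KL_minus_KL_clip_le:
  assumes "\<And>x. 0 \<le> p x" and "supp p \<subseteq> supp q" and "L \<ge> 0"
  shows "\<bar>KL p q - KL_clip L p q\<bar>
           \<le> (\<Sum>x\<in>supp p. p x * (if \<bar>log 2 (p x / q x)\<bar> > L
                                     then \<bar>log 2 (p x / q x)\<bar> - L else 0))"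
proof -
  let ?\<rho> = "\<lambda>x. log 2 (p x / q x)"
  have "KL p q - KL_clip L p q = (\<Sum>x\<in>supp p. p x * (?\<rho> x - clip L (?\<rho> x)))"
    unfolding KL_clip_eq_sum_supp[OF assms(1,2)] KL_def
    by (simp add: sum_subtractf[symmetric] algebra_simps)
  also have "\<bar>\<dots>\<bar> \<le> (\<Sum>x\<in>supp p. \<bar>p x * (?\<rho> x - clip L (?\<rho> x))\<bar>)"
    by (rule sum_abs)
  also have "\<dots> = (\<Sum>x\<in>supp p. p x * (if \<bar>?\<rho> x\<bar> > L then \<bar>?\<rho> x\<bar> - L else 0))"
    using assms(1,3) by (simp add: abs_mult abs_diff_clip)
  finally show ?thesis .
qed

lemma neg_log_le_log_inverse_Min_supp:
  assumes "is_distr p" and "x \<in> supp p"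
  shows "0 \<le> - log 2 (p x)" and "- log 2 (p x) \<le> log 2 (1 / Min (p ` supp p))"
proof -
  have px: "p x > 0"
    using assms(2) unfolding supp_def by simp
  then show "0 \<le> - log 2 (p x)"
    using is_distr_le_one[OF assms(1)] by simp
  have "Min (p ` supp p) > 0"
    using assms(2) by (subst Min_gr_iff) (auto simp: supp_def)
  moreover have "Min (p ` supp p) \<le> p x"
    using assms(2) by simp
  ultimately show "- log 2 (p x) \<le> log 2 (1 / Min (p ` supp p))"
    using px by (simp add: log_divide)
qed

lemma abs_log_ratio_le_log_inverse_Min_supp:
  assumes "is_distr p" and "is_distr q" and "supp p \<subseteq> supp q" and "x \<in> supp p"
  shows "\<bar>log 2 (p x / q x)\<bar> \<le> log 2 (1 / Min (p ` supp p)) + log 2 (1 / Min (q ` supp q))"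
proof -
  have "x \<in> supp q"
    using assms(3,4) by blast
  then have "p x > 0" "q x > 0"
    using assms(4) unfolding supp_def by auto
  then have "log 2 (p x / q x) = - log 2 (q x) - - log 2 (p x)"
    by (simp add: log_divide)
  then show ?thesis
    using neg_log_le_log_inverse_Min_supp[OF assms(1,4)]
      neg_log_le_log_inverse_Min_supp[OF assms(2) \<open>x \<in> supp q\<close>]
    by linarith
qed

lemma abs_log_ratio_le_of_powr_bounds:
  assumes "a > 0" and "2 powr (- L) * a \<le> b" and "b \<le> 2 powr L * a"
  shows "\<bar>log 2 (a / b)\<bar> \<le> L"
proof -
  have "b > 0"
    using assms(1,2) by (smt (verit) powr_gt_zero mult_pos_pos)
  have "- L + log 2 a \<le> log 2 b"
    using log_le_cancel_iff[of 2 "2 powr (- L) * a" b, THEN iffD2] assms \<open>b > 0\<close>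
    by (simp add: log_mult)
  moreover have "log 2 b \<le> L + log 2 a"
    using log_le_cancel_iff[of 2 b "2 powr L * a", THEN iffD2] assms \<open>b > 0\<close>
    by (simp add: log_mult)
  ultimately show ?thesis
    using assms(1) \<open>b > 0\<close> by (simp add: log_divide abs_le_iff)
qed

lemma sum_excess_le_indicator_sum:
  fixes w f :: "'a \<Rightarrow> real"
  assumes "finite S"
    and "\<And>x. x \<in> S \<Longrightarrow> 0 \<le> w x" and "\<And>x. x \<in> S \<Longrightarrow> \<bar>f x\<bar> \<le> A" and "L \<ge> 0"
  shows "(\<Sum>x\<in>S. w x * (if \<bar>f x\<bar> > L then \<bar>f x\<bar> - L else 0))
           \<le> A * (\<Sum>x\<in>{x\<in>S. \<bar>f x\<bar> > L}. w x)"
proof -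
  have "(\<Sum>x\<in>S. w x * (if \<bar>f x\<bar> > L then \<bar>f x\<bar> - L else 0))
          \<le> (\<Sum>x\<in>S. if \<bar>f x\<bar> > L then A * w x else 0)"
  proof (rule sum_mono)
    fix x assume "x \<in> S"
    then have "\<bar>f x\<bar> - L \<le> A" and "0 \<le> w x"
      using assms by fastforce+
    then show "w x * (if \<bar>f x\<bar> > L then \<bar>f x\<bar> - L else 0) \<le> (if \<bar>f x\<bar> > L then A * w x else 0)"
      by (simp add: mult.commute[of A] mult_left_mono)
  qed
  also have "\<dots> = A * (\<Sum>x\<in>{x\<in>S. \<bar>f x\<bar> > L}. w x)"
    using assms(1) by (simp add: sum.inter_filter sum_distrib_left if_distrib cong: if_cong)
  finally show ?thesis .
qed

theorem lemma1:
  fixes p q :: "'a::finite \<Rightarrow> real" and L :: real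
  assumes "is_distr p" and "is_distr q"
    and "supp p \<subseteq> supp q"
    and "L > 0"
  shows
   "\<bar>KL p q - KL_clip L p q\<bar>
      \<le> (\<Sum>x\<in>supp p. p x * (if \<bar>log 2 (p x / q x)\<bar> > L
                                then \<bar>log 2 (p x / q x)\<bar> - L else 0))
    \<and> \<bar>KL p q - KL_clip L p q\<bar>
      \<le> (log 2 (1 / Min (p ` supp p)) + log 2 (1 / Min (q ` supp q)))
         * (\<Sum>x\<in>{x\<in>supp p. \<bar>log 2 (p x / q x)\<bar> > L}. p x)
    \<and> ((\<forall>x\<in>supp p. 2 powr (- L) * p x \<le> q x \<and> q x \<le> 2 powr L * p x)
        \<longrightarrow> KL p q - KL_clip L p q = 0 \<and> KL_clip L p q = KL p q)"
proof -
  have p_nonneg: "\<And>x. 0 \<le> p x"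
    using assms(1) by (rule is_distr_nonneg)
  note excess_bound = abs_KL_minus_KL_clip_le[OF p_nonneg assms(3) less_imp_le[OF assms(4)]]
  have "\<bar>KL p q - KL_clip L p q\<bar>
          \<le> (log 2 (1 / Min (p ` supp p)) + log 2 (1 / Min (q ` supp q)))
             * (\<Sum>x\<in>{x\<in>supp p. \<bar>log 2 (p x / q x)\<bar> > L}. p x)"
    using excess_bound sum_excess_le_indicator_sum[of "supp p" p "\<lambda>x. log 2 (p x / q x)",
        OF finite p_nonneg abs_log_ratio_le_log_inverse_Min_supp[OF assms(1-3)] less_imp_le[OF assms(4)]]
    by linarith
  moreover have "KL p q - KL_clip L p q = 0"
    if bounds: "\<forall>x\<in>supp p. 2 powr (- L) * p x \<le> q x \<and> q x \<le> 2 powr L * p x"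
  proof -
    have "\<bar>log 2 (p x / q x)\<bar> \<le> L" if "x \<in> supp p" for x
      using abs_log_ratio_le_of_powr_bounds that bounds unfolding supp_def by auto
    then have "(\<Sum>x\<in>supp p. p x * (if \<bar>log 2 (p x / q x)\<bar> > L
                                      then \<bar>log 2 (p x / q x)\<bar> - L else 0)) = 0"
      by (intro sum.neutral) (fastforce simp: not_less)
    then show ?thesis
      using excess_bound by linarith
  qed
  ultimately show ?thesis
    using excess_bound by auto
qed

end
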